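(* Let $(X,d_1)$ and $(Y,d_2)$ be complete metric spaces, $k\ge2$, $0<\rho,\rho'<1$, and let $\mu:X^k\to X$ and $\nu:Y^k\to Y$ be nonexpansive $k$-means that are coordinatewise $\rho$-contractive and coordinatewise $\rho'$-contractive respectively. Equip $X\times Y$ with the sup metric $d((x,y),(x',y'))=\max\{d_1(x,x'),d_2(y,y')\}$. Then the product mean $\mu\times\nu$ is a nonexpansive, coordinatewise $\max\{\rho,\rho'\}$-contractive $k$-mean on $X\times Y$. Furthermore, for every $n\ge k$, the $n$-mean $(\mu\times\nu)_n$ obtained by iterated $\beta$-extension of $\mu\times\nu$ coincides with the product mean $\mu_n\times\nu_n$ of the iterated $\beta$-extensions $\mu_n,\nu_n$ of $\mu,\nu$.
   Context: A $k$-mean is a map $\mu:X^k\to X$ with $\mu(x,\ldots,x)=x$. Nonexpansive: $d(\mu(\mathbf{x}),\mu(\mathbf{y}))\le\max_j d(x_j,y_j)$; coordinatewise $\rho$-contractive: $d(\mu(\mathbf{x}),\mu(\mathbf{y}))\le\rho\,d(x_j,y_j)$ when $\mathbf{x},\mathbf{y}$ differ only in coordinate $j$. Product mean of $n$-means $\mu,\nu$: $(\mu\times\nu)((x_1,y_1),\ldots,(x_n,y_n))=(\mu(x_1,\ldots,x_n),\nu(y_1,\ldots,y_n))$. Barycentric operator of a $k$-mean: $\beta(\mathbf{x})_j=\mu(x_1,\ldots,\widehat{x_j},\ldots,x_{k+1})$; a $(k+1)$-mean $\tilde\mu$ $\beta$-extends $\mu$ if $\beta^m(\mathbf{x})\to(\tilde\mu(\mathbf{x}),\ldots,\tilde\mu(\mathbf{x}))$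 for all $\mathbf{x}$. For a nonexpansive coordinatewise $\rho$-contractive $k$-mean $\mu$ on a complete metric space, $\mu_k=\mu$ and $\mu_{n+1}$ denotes the unique continuous $\beta$-extension of $\mu_n$ (these exist for all $n\ge k$). *)

theory Defs
  imports "HOL-Analysis.Analysis"
begin

text \<open>Points of X^k are represented as lists of length k with entries in the carrier X.
  A metric space is an abstract metric space (carrier X, metric d), see Metric_space.\<close>

definition tuples :: "'a set \<Rightarrow> nat \<Rightarrow> 'a list set" where
  "tuples X k = {xs. length xs = k \<and> set xs \<subseteq> X}"

definition is_mean :: "'a set \<Rightarrow> nat \<Rightarrow> ('a list \<Rightarrow> 'a) \<Rightarrow> bool" where
  "is_mean X k \<mu> \<longleftrightarrow> (\<forall>xs\<in>tuples X k. \<mu> xs \<in> X) \<and> (\<forall>x\<in>X. \<mu> (replicate k x) = x)"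

definition nonexpansive_mean ::
  "'a set \<Rightarrow> ('a \<Rightarrow> 'a \<Rightarrow> real) \<Rightarrow> nat \<Rightarrow> ('a list \<Rightarrow> 'a) \<Rightarrow> bool" where
  "nonexpansive_mean X d k \<mu> \<longleftrightarrow>
     (\<forall>xs\<in>tuples X k. \<forall>ys\<in>tuples X k.
        d (\<mu> xs) (\<mu> ys) \<le> Max {d (xs!j) (ys!j) | j. j < k})"

definition coord_contractive ::
  "'a set \<Rightarrow> ('a \<Rightarrow> 'a \<Rightarrow> real) \<Rightarrow> nat \<Rightarrow> real \<Rightarrow> ('a list \<Rightarrow> 'a) \<Rightarrow> bool" where
  "coord_contractive X d k \<rho> \<mu> \<longleftrightarrow>
     (\<forall>xs\<in>tuples X k. \<forall>ys\<in>tuples X k. \<forall>j<k.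
        (\<forall>i<k. i \<noteq> j \<longrightarrow> xs!i = ys!i) \<longrightarrow> d (\<mu> xs) (\<mu> ys) \<le> \<rho> * d (xs!j) (ys!j))"

definition remove_nth :: "nat \<Rightarrow> 'a list \<Rightarrow> 'a list" where
  "remove_nth j xs = take j xs @ drop (Suc j) xs"

definition barycentric :: "('a list \<Rightarrow> 'a) \<Rightarrow> 'a list \<Rightarrow> 'a list" where
  "barycentric \<mu> xs = map (\<lambda>j. \<mu> (remove_nth j xs)) [0..<length xs]"

definition beta_extends ::
  "'a set \<Rightarrow> ('a \<Rightarrow> 'a \<Rightarrow> real) \<Rightarrow> nat \<Rightarrow> ('a list \<Rightarrow> 'a) \<Rightarrow> ('a list \<Rightarrow> 'a) \<Rightarrow> bool" where
  "beta_extends X d k \<mu> \<mu>' \<longleftrightarrow>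
     (\<forall>xs\<in>tuples X (Suc k). \<forall>i<Suc k.
        (\<lambda>m. d (((barycentric \<mu> ^^ m) xs) ! i) (\<mu>' xs)) \<longlonglongrightarrow> 0)"

definition continuous_mean ::
  "'a set \<Rightarrow> ('a \<Rightarrow> 'a \<Rightarrow> real) \<Rightarrow> nat \<Rightarrow> ('a list \<Rightarrow> 'a) \<Rightarrow> bool" where
  "continuous_mean X d n \<mu> \<longleftrightarrow>
     (\<forall>xs\<in>tuples X n. \<forall>e>0. \<exists>\<delta>>0. \<forall>ys\<in>tuples X n.
        (\<forall>i<n. d (xs!i) (ys!i) < \<delta>) \<longrightarrow> d (\<mu> xs) (\<mu> ys) < e)"

text \<open>The unique continuous beta-extension, taken extensional (undefined off X^(k+1))
  so that it is uniquely determined as a HOL function.\<close>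
definition beta_ext ::
  "'a set \<Rightarrow> ('a \<Rightarrow> 'a \<Rightarrow> real) \<Rightarrow> nat \<Rightarrow> ('a list \<Rightarrow> 'a) \<Rightarrow> ('a list \<Rightarrow> 'a)" where
  "beta_ext X d k \<mu> = (THE \<mu>'. is_mean X (Suc k) \<mu>' \<and> continuous_mean X d (Suc k) \<mu>'
       \<and> beta_extends X d k \<mu> \<mu>' \<and> (\<forall>xs. xs \<notin> tuples X (Suc k) \<longrightarrow> \<mu>' xs = undefined))"

text \<open>iter_ext X d k \<mu> m is the (k+m)-mean \<mu>_(k+m).\<close>
primrec iter_ext ::
  "'a set \<Rightarrow> ('a \<Rightarrow> 'a \<Rightarrow> real) \<Rightarrow> nat \<Rightarrow> ('a list \<Rightarrow> 'a) \<Rightarrow> nat \<Rightarrow> ('a list \<Rightarrow> 'a)" where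
  "iter_ext X d k \<mu> 0 = \<mu>"
| "iter_ext X d k \<mu> (Suc m) = beta_ext X d (k + m) (iter_ext X d k \<mu> m)"

definition prod_mean :: "('a list \<Rightarrow> 'a) \<Rightarrow> ('b list \<Rightarrow> 'b) \<Rightarrow> ('a \<times> 'b) list \<Rightarrow> 'a \<times> 'b" where
  "prod_mean \<mu> \<nu> zs = (\<mu> (map fst zs), \<nu> (map snd zs))"

definition sup_dist :: "('a \<Rightarrow> 'a \<Rightarrow> real) \<Rightarrow> ('b \<Rightarrow> 'b \<Rightarrow> real) \<Rightarrow> 'a \<times> 'b \<Rightarrow> 'a \<times> 'b \<Rightarrow> real" where
  "sup_dist d1 d2 p q = max (d1 (fst p) (fst q)) (d2 (snd p) (snd q))"

end

theory Submission
  imports Defs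
begin

(* For a nonexpansive, coordinatewise rho-contractive k-mean mu, two (k+1)-tuples obtained by
   deleting neighbouring entries differ in a single coordinate, so the barycentric operator shrinks
   the distance between neighbouring entries by the factor rho. By the triangle inequality along the
   tuple, the diameter of beta^m x is then O(rho^m), and since an application of beta moves each
   entry by at most that diameter, every coordinate of beta^m x is Cauchy. Completeness gives a
   common limit, which is again a nonexpansive, rho-contractive mean; it is continuous, hence it is
   the unique continuous beta-extension, and the construction iterates.
   The barycentric operator of a product mean acts componentwise, so the product of the
   beta-extensions of mu and nu is a continuous beta-extension of mu x nu for the sup metric, and
   uniqueness gives (mu x nu)_n = mu_n x nu_n by induction on n. *)

section \<open>Tuples and the barycentric operator\<close>

lemma length_remove_nth [simp]: "j < length xs \<Longrightarrow> length (remove_nth j xs) = length xs - 1"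
  by (simp add: remove_nth_def)

lemma nth_remove_nth:
  "j < length xs \<Longrightarrow> l < length xs - 1 \<Longrightarrow> remove_nth j xs ! l = (if l < j then xs ! l else xs ! Suc l)"
  by (auto simp: remove_nth_def nth_append min_def)

lemma set_remove_nth_subset: "set (remove_nth j xs) \<subseteq> set xs"
  unfolding remove_nth_def by (auto dest: in_set_takeD in_set_dropD)

lemma map_remove_nth: "map f (remove_nth j xs) = remove_nth j (map f xs)"
  by (simp add: remove_nth_def take_map drop_map)

lemma remove_nth_replicate: "j < n \<Longrightarrow> remove_nth j (replicate n x) = replicate (n - 1) x"
  by (rule nth_equalityI) (auto simp: nth_remove_nth)

lemma length_barycentric [simp]: "length (barycentric f xs) = length xs"
  by (simp add: barycentric_def)

lemma nth_barycentric [simp]: "i < length xs \<Longrightarrow> barycentric f xs ! i = f (remove_nth i xs)"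
  by (simp add: barycentric_def)

lemma length_funpow_barycentric [simp]: "length ((barycentric f ^^ m) xs) = length xs"
  by (induction m) simp_all

lemma tuplesI: "length xs = n \<Longrightarrow> (\<And>i. i < n \<Longrightarrow> xs ! i \<in> X) \<Longrightarrow> xs \<in> tuples X n"
  by (auto simp: tuples_def in_set_conv_nth)

lemma tuplesD:
  "xs \<in> tuples X n \<Longrightarrow> length xs = n"
  "xs \<in> tuples X n \<Longrightarrow> i < n \<Longrightarrow> xs ! i \<in> X"
  by (auto simp: tuples_def)

lemma remove_nth_in_tuples: "xs \<in> tuples X (Suc n) \<Longrightarrow> j < Suc n \<Longrightarrow> remove_nth j xs \<in> tuples X n"
  using set_remove_nth_subset[of j xs] by (auto simp: tuples_def)

lemma replicate_in_tuples: "x \<in> X \<Longrightarrow> replicate n x \<in> tuples X n"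
  by (auto simp: tuples_def)

lemma map_fst_in_tuples: "zs \<in> tuples (X \<times> Y) n \<Longrightarrow> map fst zs \<in> tuples X n"
  and map_snd_in_tuples: "zs \<in> tuples (X \<times> Y) n \<Longrightarrow> map snd zs \<in> tuples Y n"
  by (auto simp: tuples_def)

lemma barycentric_in_tuples:
  "is_mean X n f \<Longrightarrow> xs \<in> tuples X (Suc n) \<Longrightarrow> barycentric f xs \<in> tuples X (Suc n)"
  by (rule tuplesI) (auto simp: tuplesD is_mean_def remove_nth_in_tuples)

lemma funpow_barycentric_in_tuples:
  "is_mean X n f \<Longrightarrow> xs \<in> tuples X (Suc n) \<Longrightarrow> (barycentric f ^^ m) xs \<in> tuples X (Suc n)"
  by (induction m) (auto intro: barycentric_in_tuples)

lemma barycentric_replicate: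
  assumes "is_mean X n f" "x \<in> X"
  shows "barycentric f (replicate (Suc n) x) = replicate (Suc n) x"
  using assms by (intro nth_equalityI) (auto simp: is_mean_def remove_nth_replicate simp del: replicate_Suc)

lemma funpow_barycentric_replicate:
  "is_mean X n f \<Longrightarrow> x \<in> X \<Longrightarrow> (barycentric f ^^ m) (replicate (Suc n) x) = replicate (Suc n) x"
  by (induction m) (simp_all add: barycentric_replicate del: replicate_Suc)

lemma funpow_barycentric_cong:
  assumes "is_mean X n f" "\<forall>xs\<in>tuples X n. f xs = g xs" "xs \<in> tuples X (Suc n)"
  shows "(barycentric f ^^ m) xs = (barycentric g ^^ m) xs"
proof (induction m)
  case (Suc m)
  have "(barycentric f ^^ m) xs \<in> tuples X (Suc n)"
    using assms by (intro funpow_barycentric_in_tuples)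
  then show ?case
    using Suc assms(2) by (auto simp: barycentric_def tuplesD intro!: remove_nth_in_tuples)
qed simp

lemma le_Max_coords: "j < n \<Longrightarrow> f j \<le> Max {f j | j. j < (n::nat)}"
  by (rule Max_ge) auto

lemma Max_coords_le_iff: "0 < n \<Longrightarrow> Max {f j | j. j < (n::nat)} \<le> c \<longleftrightarrow> (\<forall>j<n. f j \<le> c)"
  by (subst Max_le_iff) auto

lemma nonexpansive_meanI:
  assumes "\<And>xs ys c. xs \<in> tuples X n \<Longrightarrow> ys \<in> tuples X n \<Longrightarrow> \<forall>j<n. d (xs!j) (ys!j) \<le> c
    \<Longrightarrow> d (f xs) (f ys) \<le> c"
  shows "nonexpansive_mean X d n f"
  unfolding nonexpansive_mean_def
proof (intro ballI)
  fix xs ys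
  assume "xs \<in> tuples X n" "ys \<in> tuples X n"
  then show "d (f xs) (f ys) \<le> Max {d (xs!j) (ys!j) | j. j < n}"
    by (rule assms) (use le_Max_coords[of _ n "\<lambda>j. d (xs!j) (ys!j)"] in auto)
qed

lemma nonexpansive_meanD:
  assumes "nonexpansive_mean X d n f" "0 < n" "xs \<in> tuples X n" "ys \<in> tuples X n"
    "\<forall>j<n. d (xs!j) (ys!j) \<le> c"
  shows "d (f xs) (f ys) \<le> c"
proof -
  have "d (f xs) (f ys) \<le> Max {d (xs!j) (ys!j) | j. j < n}"
    using assms(1,3,4) unfolding nonexpansive_mean_def by simp
  also have "\<dots> \<le> c"
    using assms(2,5) by (simp add: Max_coords_le_iff)
  finally show ?thesis .
qed

lemma coord_contractiveD:
  assumes "coord_contractive X d n \<rho> f" "xs \<in> tuples X n" "ys \<in> tuples X n" "j < n"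
    "\<forall>i<n. i \<noteq> j \<longrightarrow> xs!i = ys!i"
  shows "d (f xs) (f ys) \<le> \<rho> * d (xs!j) (ys!j)"
  using assms(1) unfolding coord_contractive_def using assms(2-5) by simp

lemma continuous_mean_if_nonexpansive:
  assumes "nonexpansive_mean X d n f" "0 < n"
  shows "continuous_mean X d n f"
  unfolding continuous_mean_def
proof (intro ballI allI impI)
  fix xs e assume xs: "xs \<in> tuples X n" and e: "(e::real) > 0"
  have "d (f xs) (f ys) < e" if "ys \<in> tuples X n" "\<forall>i<n. d (xs!i) (ys!i) < e / 2" for ys
    using nonexpansive_meanD[OF assms xs that(1), of "e / 2"] that(2) e by fastforce
  with e show "\<exists>\<delta>>0. \<forall>ys\<in>tuples X n. (\<forall>i<n. d (xs!i) (ys!i) < \<delta>) \<longrightarrow> d (f xs) (f ys) < e"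
    by (intro exI[of _ "e / 2"]) auto
qed

lemma is_mean_restrict [simp]: "is_mean X n (restrict f (tuples X n)) \<longleftrightarrow> is_mean X n f"
  by (auto simp: is_mean_def replicate_in_tuples)

lemma continuous_mean_restrict [simp]:
  "continuous_mean X d n (restrict f (tuples X n)) \<longleftrightarrow> continuous_mean X d n f"
  by (simp add: continuous_mean_def)

section \<open>Sequences in metric spaces\<close>

context Metric_space
begin

lemma dist_le_sum_dist_Suc:
  assumes in_M: "\<And>l. l \<le> k \<Longrightarrow> f l \<in> M" and "i \<le> k" "j \<le> k"
  shows "d (f i) (f j) \<le> (\<Sum>l<k. d (f l) (f (Suc l)))"
proof -
  have chain: "d (f i) (f j) \<le> (\<Sum>l\<in>{i..<j}. d (f l) (f (Suc l)))" if "i \<le> j" "j \<le> k" for i j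
    using that
  proof (induction j)
    case 0
    then show ?case using in_M by simp
  next
    case (Suc j)
    show ?case
    proof (cases "i = Suc j")
      case True
      then show ?thesis using in_M Suc.prems by simp
    next
      case False
      then have "i \<le> j" using Suc.prems by simp
      have "d (f i) (f (Suc j)) \<le> d (f i) (f j) + d (f j) (f (Suc j))"
        using in_M Suc.prems by (intro triangle) auto
      also have "\<dots> \<le> (\<Sum>l\<in>{i..<j}. d (f l) (f (Suc l))) + d (f j) (f (Suc j))"
        using Suc.IH \<open>i \<le> j\<close> Suc.prems by simp
      also have "\<dots> = (\<Sum>l\<in>{i..<Suc j}. d (f l) (f (Suc l)))"
        using \<open>i \<le> j\<close> by simp
      finally show ?thesis .
    qed
  qed
  have sub: "(\<Sum>l\<in>{i..<j}. d (f l) (f (Suc l))) \<le> (\<Sum>l<k. d (f l) (f (Suc l)))" if "j \<le> k" for i j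
    using that by (intro sum_mono2) auto
  show ?thesis
  proof (cases "i \<le> j")
    case True
    then show ?thesis using chain[of i j] sub[of j i] assms by linarith
  next
    case False
    then show ?thesis using chain[of j i] sub[of i j] assms commute[of "f i" "f j"] by simp
  qed
qed

lemma dist_le_geometric_tail:
  assumes range: "range x \<subseteq> M" and step: "\<And>n. d (x n) (x (Suc n)) \<le> C * r ^ n"
    and r: "0 \<le> r" "r < 1" and "m \<le> n"
  shows "d (x m) (x n) \<le> C / (1 - r) * r ^ m"
proof -
  have x_in_M [simp]: "x n \<in> M" for n using range by auto
  have "0 \<le> C" using order_trans[OF nonneg step[of 0]] by simp
  have "d (x m) (x n) \<le> C / (1 - r) * (r ^ m - r ^ n)"
    using \<open>m \<le> n\<close>
  proof (induction n)
    case (Suc n)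
    show ?case
    proof (cases "m = Suc n")
      case False
      then have "m \<le> n" using Suc.prems by simp
      have "d (x m) (x (Suc n)) \<le> d (x m) (x n) + d (x n) (x (Suc n))"
        by (intro triangle) auto
      also have "\<dots> \<le> C / (1 - r) * (r ^ m - r ^ n) + C * r ^ n"
        using Suc.IH \<open>m \<le> n\<close> step by (intro add_mono) auto
      also have "\<dots> = C / (1 - r) * (r ^ m - r ^ Suc n)"
        using r by (simp add: field_simps)
      finally show ?thesis .
    qed simp
  qed simp
  also have "\<dots> \<le> C / (1 - r) * r ^ m"
    using \<open>0 \<le> C\<close> r by (intro mult_left_mono) auto
  finally show ?thesis .
qed

lemma MCauchy_if_dist_Suc_le_geometric:
  assumes range: "range x \<subseteq> M" and step: "\<And>n. d (x n) (x (Suc n)) \<le> C * r ^ n"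
    and r: "0 \<le> r" "r < 1"
  shows "MCauchy x"
  unfolding MCauchy_def
proof (intro conjI range allI impI)
  fix e :: real
  assume "0 < e"
  have "0 \<le> C" using order_trans[OF nonneg step[of 0]] by simp
  have "(\<lambda>n. C / (1 - r) * r ^ n) \<longlonglongrightarrow> 0"
    using r by (intro tendsto_mult_right_zero LIMSEQ_power_zero) auto
  then have "\<forall>\<^sub>F n in sequentially. C / (1 - r) * r ^ n < e"
    using \<open>0 < e\<close> by (rule order_tendstoD(2))
  then obtain N where N: "C / (1 - r) * r ^ N < e"
    by (auto simp: eventually_sequentially)
  have close: "d (x m) (x n) < e" if "N \<le> m" "m \<le> n" for m n
  proof -
    have "C / (1 - r) * r ^ m \<le> C / (1 - r) * r ^ N"
      using \<open>0 \<le> C\<close> r that by (intro mult_left_mono power_decreasing) auto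
    then show ?thesis
      using dist_le_geometric_tail[OF range step r that(2)] N by linarith
  qed
  show "\<exists>N. \<forall>m n. N \<le> m \<longrightarrow> N \<le> n \<longrightarrow> d (x m) (x n) < e"
  proof (intro exI allI impI)
    fix m n
    assume "N \<le> m" "N \<le> n"
    then show "d (x m) (x n) < e"
      using close[of m n] close[of n m] commute[of "x m" "x n"] by (cases "m \<le> n") auto
  qed
qed

lemma limitin_dist_le:
  assumes lim: "limitin mtopology a l sequentially" "limitin mtopology b l' sequentially"
    and bound: "\<And>n. d (a n) (b n) \<le> c"
  shows "d l l' \<le> c"
proof -
  have "l \<in> M" "l' \<in> M" and in_M: "\<forall>\<^sub>F n in sequentially. a n \<in> M \<and> b n \<in> M"
    and null: "(\<lambda>n. d (a n) l) \<longlonglongrightarrow> 0" "(\<lambda>n. d (b n) l') \<longlonglongrightarrow> 0"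
    using lim by (auto simp: limitin_metric_dist_null eventually_conj_iff)
  have upper: "(\<lambda>n. c + (d (a n) l + d (b n) l')) \<longlonglongrightarrow> c + (0 + 0)"
    by (intro tendsto_intros null)
  have "\<forall>\<^sub>F n in sequentially. d l l' \<le> c + (d (a n) l + d (b n) l')"
    using in_M
  proof (rule eventually_mono)
    fix n
    assume "a n \<in> M \<and> b n \<in> M"
    then have "d l l' \<le> d l (a n) + d (a n) l'" "d (a n) l' \<le> d (a n) (b n) + d (b n) l'"
      using \<open>l \<in> M\<close> \<open>l' \<in> M\<close> by (auto intro: triangle)
    then show "d l l' \<le> c + (d (a n) l + d (b n) l')"
      using bound[of n] commute[of l "a n"] by linarith
  qed
  from tendsto_le[OF trivial_limit_sequentially upper tendsto_const this] show ?thesis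
    by simp
qed

end

section \<open>Continuous beta-extensions\<close>

definition is_beta_ext ::
  "'a set \<Rightarrow> ('a \<Rightarrow> 'a \<Rightarrow> real) \<Rightarrow> nat \<Rightarrow> ('a list \<Rightarrow> 'a) \<Rightarrow> ('a list \<Rightarrow> 'a) \<Rightarrow> bool" where
  "is_beta_ext X d k \<mu> \<mu>' \<longleftrightarrow> is_mean X (Suc k) \<mu>' \<and> continuous_mean X d (Suc k) \<mu>'
     \<and> beta_extends X d k \<mu> \<mu>' \<and> (\<forall>xs. xs \<notin> tuples X (Suc k) \<longrightarrow> \<mu>' xs = undefined)"

lemma beta_ext_eq_The: "beta_ext X d k \<mu> = The (is_beta_ext X d k \<mu>)"
  by (simp add: beta_ext_def is_beta_ext_def[abs_def])

lemma beta_ext_cong: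
  assumes "is_mean X k \<mu>" "\<forall>xs\<in>tuples X k. \<mu> xs = \<nu> xs"
  shows "beta_ext X d k \<mu> = beta_ext X d k \<nu>"
proof -
  have "beta_extends X d k \<mu> \<mu>' = beta_extends X d k \<nu> \<mu>'" for \<mu>'
    using funpow_barycentric_cong[OF assms] unfolding beta_extends_def by simp
  then show ?thesis
    unfolding beta_ext_def by simp
qed

context Metric_space
begin

lemma is_beta_ext_unique:
  assumes "is_mean M k \<mu>" "is_beta_ext M d k \<mu> f" "is_beta_ext M d k \<mu> g"
  shows "f = g"
proof
  fix xs
  show "f xs = g xs"
  proof (cases "xs \<in> tuples M (Suc k)")
    case True
    have lim: "limitin mtopology (\<lambda>m. (barycentric \<mu> ^^ m) xs ! 0) (h xs) sequentially"
      if h: "is_beta_ext M d k \<mu> h" for h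
    proof -
      have "h xs \<in> M"
        using h True by (simp add: is_beta_ext_def is_mean_def)
      moreover have "(\<lambda>m. d ((barycentric \<mu> ^^ m) xs ! 0) (h xs)) \<longlonglongrightarrow> 0"
        using h True by (simp add: is_beta_ext_def beta_extends_def)
      moreover have "(barycentric \<mu> ^^ m) xs ! 0 \<in> M" for m
        using tuplesD(2)[OF funpow_barycentric_in_tuples[OF assms(1) True]] by simp
      ultimately show ?thesis
        by (simp add: limitin_metric_dist_null)
    qed
    show ?thesis
      using limitin_metric_unique[OF lim[OF assms(2)] lim[OF assms(3)]] by simp
  next
    case False
    then have "f xs = undefined" "g xs = undefined"
      using assms(2,3) unfolding is_beta_ext_def by blast+
    then show ?thesis by simp
  qed
qed

lemma beta_ext_eqI:
  assumes "is_mean M k \<mu>" "is_beta_ext M d k \<mu> f"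
  shows "beta_ext M d k \<mu> = f"
  unfolding beta_ext_eq_The using assms(2)
  by (rule the_equality[where P = "is_beta_ext M d k \<mu>"]) (rule is_beta_ext_unique[OF assms(1) _ assms(2)])

end

section \<open>The beta-extension of a contractive mean\<close>

locale contractive_mean = Metric_space M d
  for M :: "'a set" and d :: "'a \<Rightarrow> 'a \<Rightarrow> real" +
  fixes \<mu> :: "'a list \<Rightarrow> 'a" and k :: nat and \<rho> :: real
  assumes mean: "is_mean M k \<mu>"
    and nonexpansive: "nonexpansive_mean M d k \<mu>"
    and contractive: "coord_contractive M d k \<rho> \<mu>"
    and k_pos: "0 < k" and rho_nonneg: "0 \<le> \<rho>" and rho_less_1: "\<rho> < 1"
    and complete: "mcomplete"
begin

abbreviation bary_iter :: "nat \<Rightarrow> 'a list \<Rightarrow> 'a list" where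
  "bary_iter m \<equiv> barycentric \<mu> ^^ m"

lemma nth_bary_iter_in_M: "xs \<in> tuples M (Suc k) \<Longrightarrow> i \<le> k \<Longrightarrow> bary_iter m xs ! i \<in> M"
  using tuplesD(2)[OF funpow_barycentric_in_tuples[OF mean]] by simp

lemma dist_barycentric_adjacent:
  assumes xs: "xs \<in> tuples M (Suc k)" and i: "i < k"
  shows "d (barycentric \<mu> xs ! i) (barycentric \<mu> xs ! Suc i) \<le> \<rho> * d (xs!i) (xs!Suc i)"
proof -
  have len: "length xs = Suc k" using xs by (rule tuplesD)
  \<comment> \<open>the two k-tuples differ only in position i, where they hold xs!Suc i and xs!i\<close>
  have "d (\<mu> (remove_nth i xs)) (\<mu> (remove_nth (Suc i) xs))
      \<le> \<rho> * d (remove_nth i xs ! i) (remove_nth (Suc i) xs ! i)"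
    using i len
    by (intro coord_contractiveD[OF contractive] remove_nth_in_tuples[OF xs])
       (auto simp: nth_remove_nth)
  moreover have "remove_nth i xs ! i = xs ! Suc i" "remove_nth (Suc i) xs ! i = xs ! i"
    using i len by (auto simp: nth_remove_nth)
  ultimately show ?thesis
    using i len commute by simp
qed

lemma dist_bary_iter_adjacent:
  assumes xs: "xs \<in> tuples M (Suc k)" and i: "i < k"
  shows "d (bary_iter m xs ! i) (bary_iter m xs ! Suc i) \<le> \<rho> ^ m * d (xs!i) (xs!Suc i)"
proof (induction m)
  case (Suc m)
  have "d (bary_iter (Suc m) xs ! i) (bary_iter (Suc m) xs ! Suc i)
      \<le> \<rho> * d (bary_iter m xs ! i) (bary_iter m xs ! Suc i)"
    using dist_barycentric_adjacent[OF funpow_barycentric_in_tuples[OF mean xs] i] by simp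
  also have "\<dots> \<le> \<rho> * (\<rho> ^ m * d (xs!i) (xs!Suc i))"
    using Suc.IH rho_nonneg by (rule mult_left_mono)
  finally show ?case by simp
qed simp

definition polygon_length :: "'a list \<Rightarrow> real" where
  "polygon_length xs = (\<Sum>i<k. d (xs!i) (xs!Suc i))"

lemma dist_bary_iter_le_polygon_length:
  assumes xs: "xs \<in> tuples M (Suc k)" and "i \<le> k" "j \<le> k"
  shows "d (bary_iter m xs ! i) (bary_iter m xs ! j) \<le> \<rho> ^ m * polygon_length xs"
proof -
  have "d (bary_iter m xs ! i) (bary_iter m xs ! j)
      \<le> (\<Sum>l<k. d (bary_iter m xs ! l) (bary_iter m xs ! Suc l))"
    using assms by (intro dist_le_sum_dist_Suc nth_bary_iter_in_M)
  also have "\<dots> \<le> (\<Sum>l<k. \<rho> ^ m * d (xs!l) (xs!Suc l))"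
    using dist_bary_iter_adjacent[OF xs] by (intro sum_mono) simp
  finally show ?thesis
    by (simp add: polygon_length_def sum_distrib_left)
qed

lemma dist_barycentric_self:
  assumes ys: "ys \<in> tuples M (Suc k)" and D: "\<forall>i\<le>k. \<forall>j\<le>k. d (ys!i) (ys!j) \<le> D"
    and i: "i \<le> k"
  shows "d (barycentric \<mu> ys ! i) (ys ! i) \<le> D"
proof -
  have len: "length ys = Suc k" using ys by (rule tuplesD)
  have yi: "ys ! i \<in> M" using ys i by (intro tuplesD(2)) auto
  \<comment> \<open>idempotency: ys!i is the mean of the constant tuple\<close>
  have "d (\<mu> (remove_nth i ys)) (\<mu> (replicate k (ys ! i))) \<le> D"
    using i len D
    by (intro nonexpansive_meanD[OF nonexpansive k_pos] remove_nth_in_tuples[OF ys]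
        replicate_in_tuples[OF yi]) (auto simp: nth_remove_nth)
  then show ?thesis
    using mean yi i len by (simp add: is_mean_def)
qed

lemma dist_bary_iter_Suc:
  assumes xs: "xs \<in> tuples M (Suc k)" and i: "i \<le> k"
  shows "d (bary_iter m xs ! i) (bary_iter (Suc m) xs ! i) \<le> polygon_length xs * \<rho> ^ m"
proof -
  have "d (barycentric \<mu> (bary_iter m xs) ! i) (bary_iter m xs ! i) \<le> \<rho> ^ m * polygon_length xs"
    using dist_bary_iter_le_polygon_length[OF xs] i
    by (intro dist_barycentric_self funpow_barycentric_in_tuples[OF mean xs]) auto
  then show ?thesis
    by (simp add: commute mult.commute)
qed

lemma MCauchy_bary_iter:
  assumes xs: "xs \<in> tuples M (Suc k)" and i: "i \<le> k"
  shows "MCauchy (\<lambda>m. bary_iter m xs ! i)"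
  using dist_bary_iter_Suc[OF xs i] rho_nonneg rho_less_1 nth_bary_iter_in_M[OF xs i]
  by (intro MCauchy_if_dist_Suc_le_geometric) auto

text \<open>Like \<^const>\<open>beta_ext\<close>, the limit map is \<^const>\<open>undefined\<close> off the (k+1)-tuples,
  so that the two can be equal as HOL functions.\<close>

definition bary_limit :: "'a list \<Rightarrow> 'a" where
  "bary_limit xs = (if xs \<in> tuples M (Suc k)
     then SOME l. limitin mtopology (\<lambda>m. bary_iter m xs ! 0) l sequentially else undefined)"

lemma limitin_bary_limit_0:
  assumes xs: "xs \<in> tuples M (Suc k)"
  shows "limitin mtopology (\<lambda>m. bary_iter m xs ! 0) (bary_limit xs) sequentially"
proof -
  have "\<exists>l. limitin mtopology (\<lambda>m. bary_iter m xs ! 0) l sequentially"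
    using complete MCauchy_bary_iter[OF xs] unfolding mcomplete_def by blast
  from someI_ex[OF this] show ?thesis
    using xs unfolding bary_limit_def by simp
qed

lemma limitin_bary_limit:
  assumes xs: "xs \<in> tuples M (Suc k)" and i: "i \<le> k"
  shows "limitin mtopology (\<lambda>m. bary_iter m xs ! i) (bary_limit xs) sequentially"
proof -
  let ?L = "bary_limit xs"
  have L: "?L \<in> M" and null0: "(\<lambda>m. d (bary_iter m xs ! 0) ?L) \<longlonglongrightarrow> 0"
    using limitin_bary_limit_0[OF xs] by (auto simp: limitin_metric_dist_null)
  have bound: "d (bary_iter m xs ! i) ?L \<le> \<rho> ^ m * polygon_length xs + d (bary_iter m xs ! 0) ?L" for m
  proof -
    have "d (bary_iter m xs ! i) ?L
        \<le> d (bary_iter m xs ! i) (bary_iter m xs ! 0) + d (bary_iter m xs ! 0) ?L"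
      using i L by (intro triangle nth_bary_iter_in_M[OF xs]) auto
    then show ?thesis
      using dist_bary_iter_le_polygon_length[OF xs i, of 0 m] by simp
  qed
  have "norm \<rho> < 1"
    using rho_nonneg rho_less_1 by simp
  then have upper: "(\<lambda>m. \<rho> ^ m * polygon_length xs + d (bary_iter m xs ! 0) ?L) \<longlonglongrightarrow> 0"
    by (intro tendsto_add_zero tendsto_mult_left_zero LIMSEQ_power_zero null0)
  have "(\<lambda>m. d (bary_iter m xs ! i) ?L) \<longlonglongrightarrow> 0"
    by (rule tendsto_sandwich[OF always_eventually always_eventually tendsto_const upper])
       (simp_all add: bound)
  then show ?thesis
    unfolding limitin_metric_dist_null using L nth_bary_iter_in_M[OF xs i] by simp
qed

lemma dist_bary_iter_le:
  assumes xs: "xs \<in> tuples M (Suc k)" and ys: "ys \<in> tuples M (Suc k)"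
    and c: "\<forall>i\<le>k. d (xs!i) (ys!i) \<le> c"
  shows "\<forall>i\<le>k. d (bary_iter m xs ! i) (bary_iter m ys ! i) \<le> c"
proof (induction m)
  case (Suc m)
  have len: "length (bary_iter m xs) = Suc k" "length (bary_iter m ys) = Suc k"
    using xs ys by (simp_all add: tuplesD(1))
  have "d (\<mu> (remove_nth i (bary_iter m xs))) (\<mu> (remove_nth i (bary_iter m ys))) \<le> c"
    if i: "i \<le> k" for i
    using i Suc.IH len
    by (intro nonexpansive_meanD[OF nonexpansive k_pos] remove_nth_in_tuples
        funpow_barycentric_in_tuples[OF mean xs] funpow_barycentric_in_tuples[OF mean ys])
       (auto simp: nth_remove_nth)
  then show ?case
    using len by simp
qed (use c in simp)

lemma dist_barycentric_single_coord:
  assumes xs: "xs \<in> tuples M (Suc k)" and ys: "ys \<in> tuples M (Suc k)" and j: "j \<le> k"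
    and eq: "\<forall>i\<le>k. i \<noteq> j \<longrightarrow> xs!i = ys!i" and i: "i \<le> k"
  shows "d (barycentric \<mu> xs ! i) (barycentric \<mu> ys ! i) \<le> \<rho> * d (xs!j) (ys!j)"
proof -
  have lx: "length xs = Suc k" and ly: "length ys = Suc k"
    using xs ys by (simp_all add: tuplesD(1))
  show ?thesis
  proof (cases "i = j")
    case True
    have "remove_nth i xs = remove_nth i ys"
      using lx ly i eq True by (intro nth_equalityI) (auto simp: nth_remove_nth)
    moreover have "\<mu> (remove_nth i ys) \<in> M"
      using mean remove_nth_in_tuples[OF ys] i by (simp add: is_mean_def)
    ultimately show ?thesis
      using rho_nonneg i lx ly by simp
  next
    case False
    \<comment> \<open>the position of entry j after deleting entry i\<close>
    define j' where "j' = (if j < i then j else j - 1)"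
    have j': "j' < k" "remove_nth i xs ! j' = xs ! j" "remove_nth i ys ! j' = ys ! j"
      using False i j lx ly unfolding j'_def by (auto simp: nth_remove_nth)
    have "d (\<mu> (remove_nth i xs)) (\<mu> (remove_nth i ys))
        \<le> \<rho> * d (remove_nth i xs ! j') (remove_nth i ys ! j')"
      using lx ly i eq False j'(1)
      by (intro coord_contractiveD[OF contractive] remove_nth_in_tuples[OF xs]
          remove_nth_in_tuples[OF ys]) (auto simp: nth_remove_nth j'_def)
    then show ?thesis
      using i lx ly j' by simp
  qed
qed

lemma bary_limit_in_M: "xs \<in> tuples M (Suc k) \<Longrightarrow> bary_limit xs \<in> M"
  using limitin_bary_limit_0 by (rule limitin_mspace)

lemma nonexpansive_bary_limit: "nonexpansive_mean M d (Suc k) bary_limit"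
proof (rule nonexpansive_meanI)
  fix xs ys c
  assume xs: "xs \<in> tuples M (Suc k)" and ys: "ys \<in> tuples M (Suc k)"
    and c: "\<forall>j<Suc k. d (xs!j) (ys!j) \<le> c"
  have "d (bary_iter m xs ! 0) (bary_iter m ys ! 0) \<le> c" for m
    using dist_bary_iter_le[OF xs ys] c by simp
  then show "d (bary_limit xs) (bary_limit ys) \<le> c"
    by (rule limitin_dist_le[OF limitin_bary_limit_0[OF xs] limitin_bary_limit_0[OF ys]])
qed

lemma coord_contractive_bary_limit: "coord_contractive M d (Suc k) \<rho> bary_limit"
  unfolding coord_contractive_def
proof (intro ballI allI impI)
  fix xs ys j
  assume xs: "xs \<in> tuples M (Suc k)" and ys: "ys \<in> tuples M (Suc k)" and j: "j < Suc k"
    and eq: "\<forall>i<Suc k. i \<noteq> j \<longrightarrow> xs!i = ys!i"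
  have "\<forall>i\<le>k. d (barycentric \<mu> xs ! i) (barycentric \<mu> ys ! i) \<le> \<rho> * d (xs!j) (ys!j)"
    using dist_barycentric_single_coord[OF xs ys] j eq by simp
  from dist_bary_iter_le[OF barycentric_in_tuples[OF mean xs] barycentric_in_tuples[OF mean ys] this]
  have "d (bary_iter (m + 1) xs ! 0) (bary_iter (m + 1) ys ! 0) \<le> \<rho> * d (xs!j) (ys!j)" for m
    by (simp add: funpow_Suc_right del: funpow.simps)
  then show "d (bary_limit xs) (bary_limit ys) \<le> \<rho> * d (xs!j) (ys!j)"
    by (rule limitin_dist_le[OF limitin_sequentially_offset[OF limitin_bary_limit_0[OF xs]]
          limitin_sequentially_offset[OF limitin_bary_limit_0[OF ys]]])
qed

lemma is_mean_bary_limit: "is_mean M (Suc k) bary_limit"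
  unfolding is_mean_def
proof (intro conjI ballI)
  fix x
  assume x: "x \<in> M"
  have "limitin mtopology (\<lambda>m. bary_iter m (replicate (Suc k) x) ! 0) x sequentially"
    using x by (simp add: funpow_barycentric_replicate[OF mean] del: replicate_Suc)
  then show "bary_limit (replicate (Suc k) x) = x"
    by (rule limitin_metric_unique[OF limitin_bary_limit_0[OF replicate_in_tuples[OF x]]]) simp
qed (rule bary_limit_in_M)

lemma is_beta_ext_bary_limit: "is_beta_ext M d k \<mu> bary_limit"
  unfolding is_beta_ext_def beta_extends_def
proof (intro conjI ballI allI impI)
  show "continuous_mean M d (Suc k) bary_limit"
    using nonexpansive_bary_limit by (rule continuous_mean_if_nonexpansive) simp
  fix xs i
  assume "xs \<in> tuples M (Suc k)" "i < Suc k"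
  then show "(\<lambda>m. d (bary_iter m xs ! i) (bary_limit xs)) \<longlonglongrightarrow> 0"
    using limitin_bary_limit by (simp add: limitin_metric_dist_null)
qed (simp_all add: is_mean_bary_limit bary_limit_def)

lemma beta_ext_eq_bary_limit: "beta_ext M d k \<mu> = bary_limit"
  using mean is_beta_ext_bary_limit by (rule beta_ext_eqI)

lemma is_beta_ext_beta_ext: "is_beta_ext M d k \<mu> (beta_ext M d k \<mu>)"
  unfolding beta_ext_eq_bary_limit by (rule is_beta_ext_bary_limit)

lemma contractive_mean_beta_ext: "contractive_mean M d (beta_ext M d k \<mu>) (Suc k) \<rho>"
  unfolding beta_ext_eq_bary_limit
  by unfold_locales
     (simp_all add: is_mean_bary_limit nonexpansive_bary_limit coord_contractive_bary_limit
       rho_nonneg rho_less_1 complete)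

end

lemma contractive_mean_iter_ext:
  "contractive_mean M d \<mu> k \<rho> \<Longrightarrow> contractive_mean M d (iter_ext M d k \<mu> m) (k + m) \<rho>"
  by (induction m) (simp_all add: contractive_mean.contractive_mean_beta_ext)

lemma is_beta_ext_iter_ext:
  "contractive_mean M d \<mu> k \<rho>
    \<Longrightarrow> is_beta_ext M d (k + m) (iter_ext M d k \<mu> m) (iter_ext M d k \<mu> (Suc m))"
  using contractive_mean.is_beta_ext_beta_ext[OF contractive_mean_iter_ext] by simp

section \<open>Product means\<close>

lemma Metric_space_sup_dist:
  assumes "Metric_space X d1" "Metric_space Y d2"
  shows "Metric_space (X \<times> Y) (sup_dist d1 d2)"
proof -
  interpret X: Metric_space X d1 by fact
  interpret Y: Metric_space Y d2 by fact
  show ?thesis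
  proof
    fix p q r
    show "0 \<le> sup_dist d1 d2 p q"
      by (simp add: sup_dist_def le_max_iff_disj)
    show "sup_dist d1 d2 p q = sup_dist d1 d2 q p"
      by (simp add: sup_dist_def X.commute Y.commute)
    show "sup_dist d1 d2 p q = 0 \<longleftrightarrow> p = q" if "p \<in> X \<times> Y" "q \<in> X \<times> Y"
    proof -
      have "sup_dist d1 d2 p q = 0 \<longleftrightarrow> d1 (fst p) (fst q) = 0 \<and> d2 (snd p) (snd q) = 0"
        using X.nonneg[of "fst p" "fst q"] Y.nonneg[of "snd p" "snd q"]
        unfolding sup_dist_def by linarith
      then show ?thesis
        using that by (auto simp: prod_eq_iff mem_Times_iff)
    qed
    assume "p \<in> X \<times> Y" "q \<in> X \<times> Y" "r \<in> X \<times> Y"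
    then show "sup_dist d1 d2 p r \<le> sup_dist d1 d2 p q + sup_dist d1 d2 q r"
      using X.triangle[of "fst p" "fst q" "fst r"] Y.triangle[of "snd p" "snd q" "snd r"]
      by (auto simp: sup_dist_def mem_Times_iff)
  qed
qed

lemma is_mean_prod_mean:
  "is_mean X n f \<Longrightarrow> is_mean Y n g \<Longrightarrow> is_mean (X \<times> Y) n (prod_mean f g)"
  unfolding is_mean_def prod_mean_def by (auto intro: map_fst_in_tuples map_snd_in_tuples)

lemma nonexpansive_mean_prod_mean:
  assumes f: "nonexpansive_mean X d1 n f" and g: "nonexpansive_mean Y d2 n g" and n: "0 < n"
  shows "nonexpansive_mean (X \<times> Y) (sup_dist d1 d2) n (prod_mean f g)"
proof (rule nonexpansive_meanI)
  fix xs ys c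
  assume xs: "xs \<in> tuples (X \<times> Y) n" and ys: "ys \<in> tuples (X \<times> Y) n"
    and c: "\<forall>j<n. sup_dist d1 d2 (xs!j) (ys!j) \<le> c"
  have len: "length xs = n" "length ys = n"
    using xs ys by (simp_all add: tuplesD(1))
  have "d1 (f (map fst xs)) (f (map fst ys)) \<le> c"
    using c len by (intro nonexpansive_meanD[OF f n] map_fst_in_tuples[OF xs] map_fst_in_tuples[OF ys])
      (simp add: sup_dist_def)
  moreover have "d2 (g (map snd xs)) (g (map snd ys)) \<le> c"
    using c len by (intro nonexpansive_meanD[OF g n] map_snd_in_tuples[OF xs] map_snd_in_tuples[OF ys])
      (simp add: sup_dist_def)
  ultimately show "sup_dist d1 d2 (prod_mean f g xs) (prod_mean f g ys) \<le> c"
    by (simp add: sup_dist_def prod_mean_def)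
qed

lemma coord_contractive_prod_mean:
  assumes "Metric_space X d1" "Metric_space Y d2"
    and f: "coord_contractive X d1 n \<rho> f" and g: "coord_contractive Y d2 n \<rho>' g"
    and "0 \<le> \<rho>" "0 \<le> \<rho>'"
  shows "coord_contractive (X \<times> Y) (sup_dist d1 d2) n (max \<rho> \<rho>') (prod_mean f g)"
  unfolding coord_contractive_def
proof (intro ballI allI impI)
  interpret X: Metric_space X d1 by fact
  interpret Y: Metric_space Y d2 by fact
  fix xs ys j
  assume xs: "xs \<in> tuples (X \<times> Y) n" and ys: "ys \<in> tuples (X \<times> Y) n" and j: "j < n"
    and eq: "\<forall>i<n. i \<noteq> j \<longrightarrow> xs ! i = ys ! i"
  have len: "length xs = n" "length ys = n"
    using xs ys by (simp_all add: tuplesD(1))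
  let ?s = "sup_dist d1 d2 (xs!j) (ys!j)"
  have "d1 (f (map fst xs)) (f (map fst ys)) \<le> \<rho> * d1 (fst (xs!j)) (fst (ys!j))"
    using coord_contractiveD[OF f map_fst_in_tuples[OF xs] map_fst_in_tuples[OF ys] j] eq len j
    by simp
  also have "\<dots> \<le> max \<rho> \<rho>' * ?s"
    using \<open>0 \<le> \<rho>\<close> by (intro mult_mono) (auto simp: sup_dist_def)
  finally have "d1 (f (map fst xs)) (f (map fst ys)) \<le> max \<rho> \<rho>' * ?s" .
  moreover have "d2 (g (map snd xs)) (g (map snd ys)) \<le> \<rho>' * d2 (snd (xs!j)) (snd (ys!j))"
    using coord_contractiveD[OF g map_snd_in_tuples[OF xs] map_snd_in_tuples[OF ys] j] eq len j
    by simp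
  moreover have "\<dots> \<le> max \<rho> \<rho>' * ?s"
    using \<open>0 \<le> \<rho>'\<close> by (intro mult_mono) (auto simp: sup_dist_def)
  ultimately show "sup_dist d1 d2 (prod_mean f g xs) (prod_mean f g ys) \<le> max \<rho> \<rho>' * ?s"
    by (simp add: sup_dist_def prod_mean_def)
qed

lemma continuous_mean_prod_mean:
  assumes f: "continuous_mean X d1 n f" and g: "continuous_mean Y d2 n g"
  shows "continuous_mean (X \<times> Y) (sup_dist d1 d2) n (prod_mean f g)"
  unfolding continuous_mean_def
proof (intro ballI allI impI)
  fix zs and e :: real
  assume zs: "zs \<in> tuples (X \<times> Y) n" and "0 < e"
  obtain \<delta>1 where "\<delta>1 > 0" and \<delta>1: "\<And>ws. ws \<in> tuples X n \<Longrightarrow>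
      \<forall>i<n. d1 (map fst zs ! i) (ws!i) < \<delta>1 \<Longrightarrow> d1 (f (map fst zs)) (f ws) < e"
    using f map_fst_in_tuples[OF zs] \<open>0 < e\<close> unfolding continuous_mean_def by meson
  obtain \<delta>2 where "\<delta>2 > 0" and \<delta>2: "\<And>ws. ws \<in> tuples Y n \<Longrightarrow>
      \<forall>i<n. d2 (map snd zs ! i) (ws!i) < \<delta>2 \<Longrightarrow> d2 (g (map snd zs)) (g ws) < e"
    using g map_snd_in_tuples[OF zs] \<open>0 < e\<close> unfolding continuous_mean_def by meson
  have "sup_dist d1 d2 (prod_mean f g zs) (prod_mean f g ws) < e"
    if ws: "ws \<in> tuples (X \<times> Y) n" and close: "\<forall>i<n. sup_dist d1 d2 (zs!i) (ws!i) < min \<delta>1 \<delta>2"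
    for ws
  proof -
    have len: "length zs = n" "length ws = n"
      using zs ws by (simp_all add: tuplesD(1))
    have "d1 (f (map fst zs)) (f (map fst ws)) < e"
      using close len by (intro \<delta>1 map_fst_in_tuples[OF ws]) (auto simp: sup_dist_def)
    moreover have "d2 (g (map snd zs)) (g (map snd ws)) < e"
      using close len by (intro \<delta>2 map_snd_in_tuples[OF ws]) (auto simp: sup_dist_def)
    ultimately show ?thesis
      by (simp add: sup_dist_def prod_mean_def)
  qed
  then show "\<exists>\<delta>>0. \<forall>ws\<in>tuples (X \<times> Y) n. (\<forall>i<n. sup_dist d1 d2 (zs!i) (ws!i) < \<delta>)
      \<longrightarrow> sup_dist d1 d2 (prod_mean f g zs) (prod_mean f g ws) < e"
    using \<open>\<delta>1 > 0\<close> \<open>\<delta>2 > 0\<close> by (intro exI[of _ "min \<delta>1 \<delta>2"]) auto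
qed

lemma map_barycentric_prod_mean:
  "map fst (barycentric (prod_mean f g) zs) = barycentric f (map fst zs)"
  "map snd (barycentric (prod_mean f g) zs) = barycentric g (map snd zs)"
  by (simp_all add: barycentric_def prod_mean_def map_remove_nth)

lemma map_funpow_barycentric_prod_mean:
  "map fst ((barycentric (prod_mean f g) ^^ m) zs) = (barycentric f ^^ m) (map fst zs)"
  "map snd ((barycentric (prod_mean f g) ^^ m) zs) = (barycentric g ^^ m) (map snd zs)"
  by (induction m) (simp_all add: map_barycentric_prod_mean)

lemma is_beta_ext_prod_mean:
  assumes f: "is_beta_ext X d1 k f f'" and g: "is_beta_ext Y d2 k g g'"
  shows "is_beta_ext (X \<times> Y) (sup_dist d1 d2) k (prod_mean f g)
    (restrict (prod_mean f' g') (tuples (X \<times> Y) (Suc k)))"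
  unfolding is_beta_ext_def
proof (intro conjI)
  show "is_mean (X \<times> Y) (Suc k) (restrict (prod_mean f' g') (tuples (X \<times> Y) (Suc k)))"
    using f g by (simp add: is_beta_ext_def is_mean_prod_mean)
  show "continuous_mean (X \<times> Y) (sup_dist d1 d2) (Suc k)
      (restrict (prod_mean f' g') (tuples (X \<times> Y) (Suc k)))"
    using f g by (simp add: is_beta_ext_def continuous_mean_prod_mean)
  show "beta_extends (X \<times> Y) (sup_dist d1 d2) k (prod_mean f g)
      (restrict (prod_mean f' g') (tuples (X \<times> Y) (Suc k)))"
    unfolding beta_extends_def
  proof (intro ballI allI impI)
    fix zs i
    assume zs: "zs \<in> tuples (X \<times> Y) (Suc k)" and i: "i < Suc k"
    have "(\<lambda>m. d1 ((barycentric f ^^ m) (map fst zs) ! i) (f' (map fst zs))) \<longlonglongrightarrow> 0"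
      using f map_fst_in_tuples[OF zs] i by (simp add: is_beta_ext_def beta_extends_def)
    moreover have "(\<lambda>m. d2 ((barycentric g ^^ m) (map snd zs) ! i) (g' (map snd zs))) \<longlonglongrightarrow> 0"
      using g map_snd_in_tuples[OF zs] i by (simp add: is_beta_ext_def beta_extends_def)
    ultimately have "(\<lambda>m. max (d1 ((barycentric f ^^ m) (map fst zs) ! i) (f' (map fst zs)))
        (d2 ((barycentric g ^^ m) (map snd zs) ! i) (g' (map snd zs)))) \<longlonglongrightarrow> max 0 0"
      by (rule tendsto_max)
    moreover have "fst ((barycentric (prod_mean f g) ^^ m) zs ! i) = (barycentric f ^^ m) (map fst zs) ! i"
      "snd ((barycentric (prod_mean f g) ^^ m) zs ! i) = (barycentric g ^^ m) (map snd zs) ! i" for m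
    proof -
      have "i < length ((barycentric (prod_mean f g) ^^ m) zs)"
        using i zs by (simp add: tuplesD(1))
      then show "fst ((barycentric (prod_mean f g) ^^ m) zs ! i) = (barycentric f ^^ m) (map fst zs) ! i"
        "snd ((barycentric (prod_mean f g) ^^ m) zs ! i) = (barycentric g ^^ m) (map snd zs) ! i"
        by (metis map_funpow_barycentric_prod_mean nth_map)+
    qed
    ultimately show "(\<lambda>m. sup_dist d1 d2 ((barycentric (prod_mean f g) ^^ m) zs ! i)
        (restrict (prod_mean f' g') (tuples (X \<times> Y) (Suc k)) zs)) \<longlonglongrightarrow> 0"
      using zs by (simp add: sup_dist_def prod_mean_def)
  qed
qed simp

lemma iter_ext_prod_mean:
  assumes X: "contractive_mean X d1 \<mu> k \<rho>" and Y: "contractive_mean Y d2 \<nu> k \<rho>'"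
  shows "zs \<in> tuples (X \<times> Y) (k + m) \<Longrightarrow> iter_ext (X \<times> Y) (sup_dist d1 d2) k (prod_mean \<mu> \<nu>) m zs
    = prod_mean (iter_ext X d1 k \<mu> m) (iter_ext Y d2 k \<nu> m) zs"
proof (induction m arbitrary: zs)
  case (Suc m)
  let ?A = "iter_ext X d1 k \<mu>" and ?B = "iter_ext Y d2 k \<nu>"
  interpret XY: Metric_space "X \<times> Y" "sup_dist d1 d2"
    using X Y by (intro Metric_space_sup_dist contractive_mean.axioms(1))
  have mean: "is_mean (X \<times> Y) (k + m) (prod_mean (?A m) (?B m))"
    using contractive_mean.mean[OF contractive_mean_iter_ext[OF X]]
      contractive_mean.mean[OF contractive_mean_iter_ext[OF Y]]
    by (rule is_mean_prod_mean)
  have "\<forall>zs\<in>tuples (X \<times> Y) (k + m).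
      prod_mean (?A m) (?B m) zs = iter_ext (X \<times> Y) (sup_dist d1 d2) k (prod_mean \<mu> \<nu>) m zs"
    using Suc.IH by simp
  from beta_ext_cong[OF mean this]
  have "iter_ext (X \<times> Y) (sup_dist d1 d2) k (prod_mean \<mu> \<nu>) (Suc m)
      = beta_ext (X \<times> Y) (sup_dist d1 d2) (k + m) (prod_mean (?A m) (?B m))"
    by simp
  also have "\<dots> = restrict (prod_mean (?A (Suc m)) (?B (Suc m))) (tuples (X \<times> Y) (Suc (k + m)))"
    using mean is_beta_ext_prod_mean[OF is_beta_ext_iter_ext[OF X] is_beta_ext_iter_ext[OF Y]]
    by (rule XY.beta_ext_eqI)
  finally show ?case
    using Suc.prems by simp
qed simp

theorem theorem7p5:
  fixes X :: "'a set" and d1 :: "'a \<Rightarrow> 'a \<Rightarrow> real"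
    and Y :: "'b set" and d2 :: "'b \<Rightarrow> 'b \<Rightarrow> real"
    and \<mu> :: "'a list \<Rightarrow> 'a" and \<nu> :: "'b list \<Rightarrow> 'b"
    and k :: nat and \<rho> \<rho>' :: real
  assumes "Metric_space X d1" and "Metric_space.mcomplete X d1"
    and "Metric_space Y d2" and "Metric_space.mcomplete Y d2"
    and "k \<ge> 2"
    and "0 < \<rho>" and "\<rho> < 1" and "0 < \<rho>'" and "\<rho>' < 1"
    and "is_mean X k \<mu>" and "nonexpansive_mean X d1 k \<mu>" and "coord_contractive X d1 k \<rho> \<mu>"
    and "is_mean Y k \<nu>" and "nonexpansive_mean Y d2 k \<nu>" and "coord_contractive Y d2 k \<rho>' \<nu>"
  shows "is_mean (X \<times> Y) k (prod_mean \<mu> \<nu>)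
    \<and> nonexpansive_mean (X \<times> Y) (sup_dist d1 d2) k (prod_mean \<mu> \<nu>)
    \<and> coord_contractive (X \<times> Y) (sup_dist d1 d2) k (max \<rho> \<rho>') (prod_mean \<mu> \<nu>)
    \<and> (\<forall>n\<ge>k. \<forall>zs\<in>tuples (X \<times> Y) n.
         iter_ext (X \<times> Y) (sup_dist d1 d2) k (prod_mean \<mu> \<nu>) (n - k) zs
           = prod_mean (iter_ext X d1 k \<mu> (n - k)) (iter_ext Y d2 k \<nu> (n - k)) zs)"
proof -
  have "0 < k" using \<open>k \<ge> 2\<close> by simp
  have X: "contractive_mean X d1 \<mu> k \<rho>" and Y: "contractive_mean Y d2 \<nu> k \<rho>'"
    using assms \<open>0 < k\<close> by (simp_all add: contractive_mean_def contractive_mean_axioms_def)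
  have "iter_ext (X \<times> Y) (sup_dist d1 d2) k (prod_mean \<mu> \<nu>) (n - k) zs
      = prod_mean (iter_ext X d1 k \<mu> (n - k)) (iter_ext Y d2 k \<nu> (n - k)) zs"
    if "k \<le> n" "zs \<in> tuples (X \<times> Y) n" for n zs
    using that by (intro iter_ext_prod_mean[OF X Y]) simp
  then show ?thesis
    using assms \<open>0 < k\<close>
    by (simp add: is_mean_prod_mean nonexpansive_mean_prod_mean coord_contractive_prod_mean)
qed

end
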